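(* Let $n\in\mathbb{N}$, $\boldsymbol{A}\in\mathbb{R}^{n\times n}$, $\boldsymbol{b}\in\mathbb{R}^n$ with $(\boldsymbol{A},\boldsymbol{b})$ controllable, and $g:\mathbb{R}^n\to\mathbb{R}$ with $g(\boldsymbol{0})\neq 0$. Let $\mathcal{X}=\bigcup_{i=1}^s\mathcal{X}_i\subset\mathbb{R}^n$ with $s\in\mathbb{N}$ and each $\mathcal{X}_i$ convex, such that for every $i$ either ($g\ge 0$ on $\mathcal{X}_i$ and $g$ concave on $\mathcal{X}_i$) or ($g\le 0$ on $\mathcal{X}_i$ and $g$ convex on $\mathcal{X}_i$); assume $\boldsymbol{0}\in\mathrm{int}(\mathcal{X}_1)$ and $\mathcal{U}=[\underline{u},\overline{u}]$ with $\underline{u}<0<\overline{u}$. Let $\boldsymbol{c}\in\mathbb{R}^n$ satisfy $\boldsymbol{c}^\top\boldsymbol{A}^{i}\boldsymbol{b}=0$ for $i\in\{0,\dots,n-2\}$ and $\boldsymbol{c}^\top\boldsymbol{A}^{n-1}\boldsymbol{b}\neq0$, let $b_0\neq0$, $a_0,\dots,a_{n-1}\in\mathbb{R}$, $\beta:=\boldsymbol{c}^\top\boldsymbol{A}^{n-1}\boldsymbol{b}$, $\boldsymbol{\alpha}^\top:=\boldsymbol{c}^\top(\boldsymbol{A}^n+\sum_{i=0}^{n-1}a_i\boldsymbol{A}^i)$. Let $\hat\ell:\mathbb{R}^n\times\mathbb{R}\to\mathbb{R}$ be positive definite, and define $\ell:\mathbb{R}^n\times\mathbb{R}\to\mathbb{R}$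 by $$\ell(\boldsymbol{x},u):=\hat\ell\Big(\boldsymbol{x},\frac{\beta g(\boldsymbol{x})u+\boldsymbol{\alpha}^\top\boldsymbol{x}}{b_0}\Big).$$ Then $\ell$ is positive definite.
   Context: A function $F:\mathbb{R}^n\times\mathbb{R}\to\mathbb{R}$ is called positive definite if $F(\boldsymbol{0},0)=0$ and $F(\boldsymbol{x},w)>0$ for all $(\boldsymbol{x},w)\neq(\boldsymbol{0},0)$. Here $\hat\ell$ is a stage cost in terms of the state and an artificial input $v$ of the exactly linearized version of the system $\boldsymbol{x}(k+1)=\boldsymbol{A}\boldsymbol{x}(k)+g(\boldsymbol{x}(k))\boldsymbol{b}\,u(k)$, and $\ell$ is the induced stage cost in terms of the original input $u$. *)

theory Defs
  imports "HOL-Analysis.Analysis"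
begin

fun mat_pow :: "real^'n^'n \<Rightarrow> nat \<Rightarrow> real^'n^'n" where
  "mat_pow A 0 = mat 1"
| "mat_pow A (Suc k) = A ** mat_pow A k"

text \<open>(A,b) controllable: the Kalman controllability matrix [b, Ab, ..., A^(n-1) b]
  has full rank n, i.e. its columns span R^n.\<close>
definition controllable :: "real^'n^'n \<Rightarrow> real^'n \<Rightarrow> bool" where
  "controllable A b \<longleftrightarrow> span {mat_pow A i *v b | i. i < CARD('n)} = UNIV"

definition pos_definite :: "((real^'n) \<times> real \<Rightarrow> real) \<Rightarrow> bool" where
  "pos_definite F \<longleftrightarrow> F (0, 0) = 0 \<and> (\<forall>x w. (x, w) \<noteq> (0, 0) \<longrightarrow> F (x, w) > 0)"

end

theory Submission
  imports Defs
begin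

text \<open>The stage cost \<open>\<ell>(x, u) = lhat(x, v(x, u))\<close> only reparametrises the input for each
  fixed state. Away from \<open>x = 0\<close> positivity is inherited from \<open>lhat\<close> directly; at \<open>x = 0\<close>
  the artificial input is \<open>v(0, u) = \<beta> g(0) u / b\<^sub>0\<close>, which vanishes only for \<open>u = 0\<close>
  because \<open>\<beta>\<close>, \<open>g(0)\<close> and \<open>b\<^sub>0\<close> are nonzero.\<close>

lemma pos_definite_reparam_input:
  fixes F :: "(real^'n) \<times> real \<Rightarrow> real" and h :: "real^'n \<Rightarrow> real \<Rightarrow> real"
  assumes "pos_definite F"
    and "h 0 0 = 0"
    and "\<And>u. u \<noteq> 0 \<Longrightarrow> h 0 u \<noteq> 0"
  shows "pos_definite (\<lambda>(x, u). F (x, h x u))"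
proof -
  have "(x, h x u) \<noteq> (0, 0)" if "(x, u) \<noteq> (0, 0)" for x u
    using that assms(3) by (cases "x = 0") auto
  then show ?thesis
    using assms(1,2) by (auto simp: pos_definite_def)
qed

theorem proposition1:
  fixes A :: "real^'n^'n" and b c :: "real^'n" and g :: "real^'n \<Rightarrow> real"
    and s :: nat and X :: "nat \<Rightarrow> (real^'n) set" and ul uu :: real
    and b0 :: real and a :: "nat \<Rightarrow> real"
    and lhat :: "(real^'n) \<times> real \<Rightarrow> real"
  assumes ctrl: "controllable A b"
    and g0: "g 0 \<noteq> 0"
    and Xconv: "\<forall>i\<in>{1..s}. convex (X i)"
    and Xg: "\<forall>i\<in>{1..s}. ((\<forall>x\<in>X i. g x \<ge> 0) \<and> concave_on (X i) g)
                          \<or> ((\<forall>x\<in>X i. g x \<le> 0) \<and> convex_on (X i) g)"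
    and X1: "1 \<le> s" "0 \<in> interior (X 1)"
    and U: "ul < 0" "0 < uu"
    and c_rel: "\<forall>i. i + 2 \<le> CARD('n) \<longrightarrow> c \<bullet> (mat_pow A i *v b) = 0"
    and c_nz: "c \<bullet> (mat_pow A (CARD('n) - 1) *v b) \<noteq> 0"
    and b0: "b0 \<noteq> 0"
    and lhat: "pos_definite lhat"
  shows "let \<beta> = c \<bullet> (mat_pow A (CARD('n) - 1) *v b);
             M = mat_pow A (CARD('n)) + (\<Sum>i<CARD('n). a i *\<^sub>R mat_pow A i);
             \<alpha>x = (\<lambda>x. c \<bullet> (M *v x))
         in pos_definite (\<lambda>(x, u). lhat (x, (\<beta> * g x * u + \<alpha>x x) / b0))"
proof -
  define \<beta> where "\<beta> = c \<bullet> (mat_pow A (CARD('n) - 1) *v b)"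
  define M where "M = mat_pow A (CARD('n)) + (\<Sum>i<CARD('n). a i *\<^sub>R mat_pow A i)"
  have "pos_definite (\<lambda>(x, u). lhat (x, (\<beta> * g x * u + c \<bullet> (M *v x)) / b0))"
  proof (rule pos_definite_reparam_input[OF lhat])
    show "(\<beta> * g 0 * 0 + c \<bullet> (M *v 0)) / b0 = 0"
      by simp
    fix u :: real
    assume "u \<noteq> 0"
    then show "(\<beta> * g 0 * u + c \<bullet> (M *v 0)) / b0 \<noteq> 0"
      using g0 c_nz b0 unfolding \<beta>_def by simp
  qed
  then show ?thesis
    unfolding \<beta>_def M_def Let_def .
qed

end
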